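(* Let $\mathcal H$ be the $5$-uniform hypergraph defined below and let $e,f$ be two edges of $\mathcal H$. Then every monomorphism $\phi : V(\mathcal{H}_{ef}) \to V(\mathcal{H})$ is the identity.
   Context: $\mathcal{H}$ has vertex set $\{z, v_1,\dots,v_9\}$ and edges $r=\{z,v_1,v_3,v_5,v_8\}$, $g=\{z,v_2,v_4,v_7,v_9\}$, $a=\{v_1,v_4,v_6,v_8,v_9\}$, $b=\{v_9,v_1,v_2,v_3,v_4\}$, and $e_i=\{v_i,v_{i+1},v_{i+2},v_{i+3},v_{i+4}\}$ for $i=1,\dots,5$. $\mathcal{H}_{ef}$ is the hypergraph with edge set $E(\mathcal H)\setminus\{e,f\}$, and $V(\mathcal H_{ef})$ is the union of its edges. A monomorphism $\phi: V(\mathcal{H}_{ef})\to V(\mathcal{H})$ is an injective map such that $\{\phi(y): y\in x\}$ is an edge of $\mathcal H$ for every edge $x$ of $\mathcal H_{ef}$; "identity" means $\phi(y)=y$ for all $y\in V(\mathcal H_{ef})$. *)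

theory Defs
  imports Main
begin

text \<open>Vertices are encoded as natural numbers: z = 0 and v_i = i for i = 1..9.\<close>

definition vz :: nat where "vz = 0"

definition edge_r :: "nat set" where "edge_r = {vz, 1, 3, 5, 8}"
definition edge_g :: "nat set" where "edge_g = {vz, 2, 4, 7, 9}"
definition edge_a :: "nat set" where "edge_a = {1, 4, 6, 8, 9}"
definition edge_b :: "nat set" where "edge_b = {9, 1, 2, 3, 4}"
definition edge_e :: "nat \<Rightarrow> nat set" where "edge_e i = {i, i+1, i+2, i+3, i+4}"

definition H_edges :: "nat set set" where
  "H_edges = {edge_r, edge_g, edge_a, edge_b} \<union> edge_e ` {1..5}"

definition H_vertices :: "nat set" where
  "H_vertices = insert vz {1..9}"

definition Hef_edges :: "nat set \<Rightarrow> nat set \<Rightarrow> nat set set" where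
  "Hef_edges e f = H_edges - {e, f}"

definition Hef_vertices :: "nat set \<Rightarrow> nat set \<Rightarrow> nat set" where
  "Hef_vertices e f = \<Union> (Hef_edges e f)"

definition monomorphism_Hef :: "nat set \<Rightarrow> nat set \<Rightarrow> (nat \<Rightarrow> nat) \<Rightarrow> bool" where
  "monomorphism_Hef e f \<phi> \<longleftrightarrow>
     inj_on \<phi> (Hef_vertices e f) \<and> \<phi> ` Hef_vertices e f \<subseteq> H_vertices \<and>
     (\<forall>x \<in> Hef_edges e f. \<phi> ` x \<in> H_edges)"

end

theory Submission
  imports Defs
begin

text \<open>
  A monomorphism maps the seven surviving edges injectively onto edges of \<open>\<H>\<close> and
  preserves the sizes of their pairwise intersections, so it induces an injective map
  between edge indices that preserves the intersection table of \<open>\<H>\<close>. For each of the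
  36 choices of \<open>{e, f}\<close> a finite search lists all such index maps; for each of them, the
  requirement that a vertex lies in exactly the images of the edges containing it either
  leaves some vertex without a possible image or pins every vertex down to itself.
\<close>

lemma card_image_Int_inj_on:
  assumes "inj_on f V" and "A \<subseteq> V" and "B \<subseteq> V"
  shows "card (f ` A \<inter> f ` B) = card (A \<inter> B)"
proof -
  have "f ` A \<inter> f ` B = f ` (A \<inter> B)"
    using inj_on_image_Int[OF assms] by simp
  moreover have "inj_on f (A \<inter> B)"
    using assms(1) by (rule inj_on_subset) (use assms(2) in blast)
  ultimately show ?thesis
    by (simp add: card_image)
qed

definition edge_list :: "nat list list" where
  "edge_list =
     [[0,1,3,5,8], [0,2,4,7,9], [1,4,6,8,9], [9,1,2,3,4],
      [1,2,3,4,5], [2,3,4,5,6], [3,4,5,6,7], [4,5,6,7,8], [5,6,7,8,9]]"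

definition edge :: "nat \<Rightarrow> nat set" where
  "edge k = set (edge_list ! k)"

lemma H_edges_eq: "H_edges = edge ` {..<9}"
proof -
  have "{..<9::nat} = {0,1,2,3,4,5,6,7,8}" and "{1..5::nat} = {1,2,3,4,5}"
    by auto
  moreover have "edge 0 = edge_r" "edge 1 = edge_g" "edge 2 = edge_a" "edge 3 = edge_b"
    "edge 4 = edge_e 1" "edge 5 = edge_e 2" "edge 6 = edge_e 3" "edge 7 = edge_e 4"
    "edge 8 = edge_e 5"
    by (auto simp: edge_def edge_list_def edge_r_def edge_g_def edge_a_def edge_b_def
        edge_e_def vz_def)
  ultimately show ?thesis
    by (simp only: H_edges_def image_insert image_empty Un_insert_left Un_empty_left)
qed

lemma H_vertices_eq: "H_vertices = {..<10}"
  by (auto simp: H_vertices_def vz_def)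

definition meet_table :: "nat list list" where
  "meet_table =
     [[5,1,2,2,3,2,2,2,2], [1,5,2,3,2,2,2,2,2], [2,2,5,3,2,2,2,3,3],
      [2,3,3,5,4,3,2,1,1], [3,2,2,4,5,4,3,2,1], [2,2,2,3,4,5,4,3,2],
      [2,2,2,2,3,4,5,4,3], [2,2,3,1,2,3,4,5,4], [2,2,3,1,1,2,3,4,5]]"

lemma meet_table_eq_card:
  assumes "a < 9" and "b < 9"
  shows "meet_table ! a ! b = card (edge a \<inter> edge b)"
proof -
  have "list_all (\<lambda>a. list_all (\<lambda>b. meet_table ! a ! b = card (edge a \<inter> edge b))
      [0..<9]) [0..<9]"
    by code_simp
  then show ?thesis
    using assms by (simp add: list_all_iff)
qed

lemma inj_on_edge: "inj_on edge {..<9}"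
proof -
  have "list_all (\<lambda>a. list_all (\<lambda>b. edge a = edge b \<longrightarrow> a = b) [0..<9]) [0..<9]"
    by code_simp
  then show ?thesis
    by (auto simp: list_all_iff inj_on_def)
qed

definition remaining_edges :: "nat \<Rightarrow> nat \<Rightarrow> nat list" where
  "remaining_edges i j = filter (\<lambda>k. k \<noteq> i \<and> k \<noteq> j) [0..<9]"

lemma Hef_edges_eq:
  assumes "i < 9" and "j < 9"
  shows "Hef_edges (edge i) (edge j) = edge ` set (remaining_edges i j)"
proof -
  have "edge ` {..<9} - {edge i, edge j} = edge ` ({..<9} - {i, j})"
    using inj_on_edge assms by (auto simp: inj_on_eq_iff)
  then show ?thesis
    by (auto simp: Hef_edges_def H_edges_eq remaining_edges_def)
qed

fun table_embeddings ::
  "'a list list \<Rightarrow> nat \<Rightarrow> nat list \<Rightarrow> nat list \<Rightarrow> nat list \<Rightarrow> nat list list" where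
  "table_embeddings M n ks ts [] = [ts]"
| "table_embeddings M n ks ts (r # rs) =
     concat (map (\<lambda>t. table_embeddings M n (ks @ [r]) (ts @ [t]) rs)
       (filter (\<lambda>t. t \<notin> set ts \<and> list_all2 (\<lambda>k u. M ! t ! u = M ! r ! k) ks ts) [0..<n]))"

lemma table_embeddings_complete:
  assumes "distinct (ks @ rs)" and "inj_on \<tau> (set (ks @ rs))"
    and "\<forall>a \<in> set (ks @ rs). \<tau> a < n"
    and "\<forall>a \<in> set (ks @ rs). \<forall>b \<in> set (ks @ rs). M ! \<tau> a ! \<tau> b = M ! a ! b"
  shows "map \<tau> (ks @ rs) \<in> set (table_embeddings M n ks (map \<tau> ks) rs)"
  using assms
proof (induction rs arbitrary: ks)
  case Nil
  then show ?case by simp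
next
  case (Cons r rs)
  have "\<tau> r \<notin> set (map \<tau> ks)"
    using Cons.prems(1,2) by (auto simp: inj_on_def)
  moreover have "list_all2 (\<lambda>k u. M ! \<tau> r ! u = M ! r ! k) ks (map \<tau> ks)"
    using Cons.prems(4) by (simp add: list_all2_map2 list_all2_same)
  moreover have "\<tau> r \<in> set [0..<n]"
    using Cons.prems(3) by simp
  moreover have "map \<tau> ((ks @ [r]) @ rs)
      \<in> set (table_embeddings M n (ks @ [r]) (map \<tau> (ks @ [r])) rs)"
    using Cons.prems by (intro Cons.IH) auto
  ultimately show ?case
    by (auto simp del: upt_Suc)
qed

lemma monomorphism_induces_table_embedding:
  assumes "monomorphism_Hef (edge i) (edge j) \<phi>" and "i < 9" and "j < 9"
  obtains \<tau>
  where "map \<tau> (remaining_edges i j)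
           \<in> set (table_embeddings meet_table 9 [] [] (remaining_edges i j))"
    and "\<forall>k \<in> set (remaining_edges i j). \<phi> ` edge k = edge (\<tau> k)"
proof -
  let ?ks = "remaining_edges i j"
  let ?V = "\<Union> (edge ` set ?ks)"
  have inj: "inj_on \<phi> ?V" and "\<forall>k \<in> set ?ks. \<exists>t. t < 9 \<and> \<phi> ` edge k = edge t"
    using assms unfolding monomorphism_Hef_def Hef_vertices_def Hef_edges_eq[OF assms(2,3)]
      H_edges_eq by auto
  then obtain \<tau> where \<tau>: "\<forall>k \<in> set ?ks. \<tau> k < 9 \<and> \<phi> ` edge k = edge (\<tau> k)"
    by metis
  have ks_lt: "k < 9" if "k \<in> set ?ks" for k
    using that by (simp add: remaining_edges_def)
  have sub: "edge k \<subseteq> ?V" if "k \<in> set ?ks" for k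
    using that by blast
  have "inj_on \<tau> (set ?ks)"
  proof (rule inj_onI)
    fix a b assume a: "a \<in> set ?ks" and b: "b \<in> set ?ks" and "\<tau> a = \<tau> b"
    then have "\<phi> ` edge a = \<phi> ` edge b"
      using \<tau> by simp
    then have "edge a = edge b"
      using inj_on_image_eq_iff[OF inj sub[OF a] sub[OF b]] by simp
    then show "a = b"
      using inj_on_edge ks_lt[OF a] ks_lt[OF b] by (auto simp: inj_on_eq_iff)
  qed
  moreover have "meet_table ! \<tau> a ! \<tau> b = meet_table ! a ! b"
    if a: "a \<in> set ?ks" and b: "b \<in> set ?ks" for a b
  proof -
    have "meet_table ! \<tau> a ! \<tau> b = card (\<phi> ` edge a \<inter> \<phi> ` edge b)"
      using \<tau> a b by (simp add: meet_table_eq_card)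
    also have "\<dots> = card (edge a \<inter> edge b)"
      using card_image_Int_inj_on[OF inj sub[OF a] sub[OF b]] .
    finally show ?thesis
      using ks_lt[OF a] ks_lt[OF b] by (simp add: meet_table_eq_card)
  qed
  ultimately have "map \<tau> ([] @ ?ks) \<in> set (table_embeddings meet_table 9 [] (map \<tau> []) ?ks)"
    using \<tau> by (intro table_embeddings_complete) (auto simp: remaining_edges_def)
  then show ?thesis
    using that \<tau> by simp
qed

text \<open>
  The only possible images of \<open>v\<close> under an injective vertex map sending edge \<open>ks ! q\<close>
  onto edge \<open>ts ! q\<close> for every \<open>q\<close>.
\<close>

definition vertex_candidates :: "nat list \<Rightarrow> nat list \<Rightarrow> nat \<Rightarrow> nat list" where
  "vertex_candidates ks ts v =
     filter (\<lambda>w. list_all2 (\<lambda>k t. w \<in> edge t \<longleftrightarrow> v \<in> edge k) ks ts) [0..<10]"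

definition forces_identity :: "nat list \<Rightarrow> nat list \<Rightarrow> bool" where
  "forces_identity ks ts \<longleftrightarrow>
     (\<exists>v \<in> \<Union> (edge ` set ks). vertex_candidates ks ts v = []) \<or>
     (\<forall>v \<in> \<Union> (edge ` set ks). set (vertex_candidates ks ts v) \<subseteq> {v})"

lemma forces_identity_imp_fixed:
  assumes "forces_identity ks (map \<tau> ks)"
    and inj: "inj_on \<phi> (\<Union> (edge ` set ks))" and "\<phi> ` \<Union> (edge ` set ks) \<subseteq> {..<10}"
    and "\<forall>k \<in> set ks. \<phi> ` edge k = edge (\<tau> k)"
  shows "\<forall>v \<in> \<Union> (edge ` set ks). \<phi> v = v"
proof -
  have "\<phi> v \<in> set (vertex_candidates ks (map \<tau> ks) v)" if v: "v \<in> \<Union> (edge ` set ks)" for v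
  proof -
    have "\<phi> v \<in> edge (\<tau> k) \<longleftrightarrow> v \<in> edge k" if "k \<in> set ks" for k
      using assms(4) that inj_on_image_mem_iff[OF inj v, of "edge k"] by auto
    then show ?thesis
      using assms(3) v by (auto simp: vertex_candidates_def list_all2_map2 list_all2_same)
  qed
  then show ?thesis
    using assms(1) unfolding forces_identity_def by fastforce
qed

definition rigid_without :: "nat \<Rightarrow> nat \<Rightarrow> bool" where
  "rigid_without i j \<longleftrightarrow>
     list_all (forces_identity (remaining_edges i j))
       (table_embeddings meet_table 9 [] [] (remaining_edges i j))"

lemma rigid_without:
  assumes "i < 9" and "j < 9" and "i \<noteq> j"
  shows "rigid_without i j"
proof -
  have "list_all (case_prod rigid_without) (filter (case_prod (<)) (List.product [0..<9] [0..<9]))"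
    by code_simp
  then have ordered: "rigid_without a b" if "a < b" and "b < 9" for a b
    using that by (auto simp: list_all_iff)
  have symmetric: "rigid_without a b = rigid_without b a" for a b
    by (simp add: rigid_without_def remaining_edges_def conj_commute)
  show ?thesis
    using assms ordered symmetric by (metis linorder_neqE_nat)
qed

theorem lemma4p12:
  fixes e f :: "nat set" and \<phi> :: "nat \<Rightarrow> nat"
  assumes "e \<in> H_edges" and "f \<in> H_edges" and "e \<noteq> f"
    and "monomorphism_Hef e f \<phi>"
  shows "\<forall>y \<in> Hef_vertices e f. \<phi> y = y"
proof -
  obtain i j where ij: "i < 9" "j < 9" and e: "e = edge i" and f: "f = edge j"
    using assms(1,2) by (auto simp: H_edges_eq)
  obtain \<tau>
    where \<tau>: "map \<tau> (remaining_edges i j)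
                \<in> set (table_embeddings meet_table 9 [] [] (remaining_edges i j))"
    and images: "\<forall>k \<in> set (remaining_edges i j). \<phi> ` edge k = edge (\<tau> k)"
    using monomorphism_induces_table_embedding assms(4) ij e f by blast
  have "forces_identity (remaining_edges i j) (map \<tau> (remaining_edges i j))"
    using rigid_without[OF ij] assms(3) \<tau> e f by (auto simp: rigid_without_def list_all_iff)
  moreover have "Hef_vertices e f = \<Union> (edge ` set (remaining_edges i j))"
    using Hef_edges_eq[OF ij] by (simp add: Hef_vertices_def e f)
  ultimately show ?thesis
    using forces_identity_imp_fixed images assms(4)
    by (simp add: monomorphism_Hef_def H_vertices_eq)
qed

end
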